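(* Let $A$ be a $3\times3$ skew-symmetric integer matrix whose associated quiver is connected, and let $g\in\mathbb{Z}^3$ be nonzero with $Ag=0$. The graded cluster algebra $\mathcal{A}((x_1,x_2,x_3),A,g)$ has infinitely many occurring degrees if and only if $A$ is mutation-infinite.
   Context: Matrix mutation: $\mu_k(B)=(b'_{ij})$ with $b'_{ij}=-b_{ij}$ if $i=k$ or $j=k$, $b'_{ij}=b_{ij}+\operatorname{sgn}(b_{ik})\max(b_{ik}b_{kj},0)$ otherwise; $B$ is mutation-infinite if infinitely many distinct matrices are obtained from it by finite sequences of mutations. The quiver of $B$ has $b_{ij}$ arrows $i\to j$ when $b_{ij}>0$. A seed $((x_1,x_2,x_3),B)$ mutates in direction $k$ to $(x',\mu_k B)$ with $x'_j=x_j$ ($j\ne k$), $x'_k=\big(\prod_{b_{ik}>0}x_i^{b_{ik}}+\prod_{b_{ik}<0}x_i^{-b_{ik}}\big)/x_k$. Cluster variables are all entries of reachable clusters; grading $\deg x_i=g_i$, and under mutation at $k$ the degree vector becomes $g'$ with $g'_j=g_j$ ($j\ne k$), $g'_k=-g_k+\sum_{b_{ik}>0}b_{ik}g_i$; cluster variables are homogeneous. A degree occurs if some cluster variable has it. *)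

theory Defs
  imports "HOL-Analysis.Analysis" "HOL-Library.Numeral_Type"
begin

type_synonym exmat = "int ^ 3 ^ 3"
type_synonym degvec = "int ^ 3"

definition mat_mut :: "3 \<Rightarrow> exmat \<Rightarrow> exmat" where
  "mat_mut k B = (\<chi> i j. if i = k \<or> j = k then - (B $ i $ j)
       else B $ i $ j + sgn (B $ i $ k) * max (B $ i $ k * B $ k $ j) 0)"

definition deg_mut :: "3 \<Rightarrow> exmat \<Rightarrow> degvec \<Rightarrow> degvec" where
  "deg_mut k B g = (\<chi> j. if j = k
       then - (g $ k) + (\<Sum>i\<in>{i. B $ i $ k > 0}. B $ i $ k * g $ i)
       else g $ j)"

definition skew_symmetric :: "exmat \<Rightarrow> bool" where
  "skew_symmetric B \<longleftrightarrow> (\<forall>i j. B $ i $ j = - (B $ j $ i))"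

definition quiver_connected :: "exmat \<Rightarrow> bool" where
  "quiver_connected B \<longleftrightarrow> (\<forall>i j. (i, j) \<in> {(a, b). B $ a $ b \<noteq> 0}\<^sup>*)"

inductive_set mut_class :: "exmat \<Rightarrow> exmat set" for A where
  base: "A \<in> mut_class A"
| step: "B \<in> mut_class A \<Longrightarrow> mat_mut k B \<in> mut_class A"

definition mutation_infinite :: "exmat \<Rightarrow> bool" where
  "mutation_infinite A \<longleftrightarrow> infinite (mut_class A)"

text \<open>Graded seeds (exchange matrix, degrees of the cluster variables) reachable from (A, g).\<close>
inductive_set graded_seeds :: "exmat \<Rightarrow> degvec \<Rightarrow> (exmat \<times> degvec) set" for A g where
  base: "(A, g) \<in> graded_seeds A g"
| step: "(B, d) \<in> graded_seeds A g \<Longrightarrow> (mat_mut k B, deg_mut k B d) \<in> graded_seeds A g"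

text \<open>Degrees occurring in the graded cluster algebra A((x1,x2,x3),A,g): degrees of
  all cluster variables, i.e. of all entries of reachable clusters.\<close>
definition occurring_degrees :: "exmat \<Rightarrow> degvec \<Rightarrow> int set" where
  "occurring_degrees A g = {d $ j | B d j. (B, d) \<in> graded_seeds A g}"

end

theory Submission
  imports Defs
begin

text \<open>For a skew-symmetric 3x3 matrix B let w(B) = (b23, -b13, b12); it spans the kernel
  of B when B is nonzero, and a skew-symmetric B is determined by w(B). The key identity is
  that degree mutation maps w(B) to -w(mu_k B). Connectedness makes w(A) nonzero, so the
  initial degree vector g, lying in the kernel of A, is a rational multiple of w(A); by
  induction along mutations the degree vector of every reachable seed (B, d) is the same
  multiple of \<plusminus>w(B). Hence, up to a fixed nonzero factor and signs, the occurring degrees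
  are the entries of the matrices in the mutation class, and these entries are bounded
  exactly when the mutation class is finite.\<close>

definition kernel_vec :: "exmat \<Rightarrow> degvec" where
  "kernel_vec B = (\<chi> j. if j = 1 then B$2$3 else if j = 2 then - B$1$3 else B$1$2)"

lemma sum_Collect_3:
  "(\<Sum>i\<in>{i::3. P i}. f i) =
     (if P 1 then f 1 else 0) + (if P 2 then f 2 else 0) + (if P 3 then f 3 else 0)"
proof -
  have "(\<Sum>i\<in>{i::3. P i}. f i) = (\<Sum>i\<in>UNIV. if P i then f i else 0)"
    by (simp add: sum.If_cases)
  then show ?thesis by (simp add: sum_3)
qed

lemma skew_symmetric_3_iff:
  "skew_symmetric B \<longleftrightarrow>
     B$1$1 = 0 \<and> B$2$2 = 0 \<and> B$3$3 = 0 \<and>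
     B$2$1 = - B$1$2 \<and> B$3$1 = - B$1$3 \<and> B$3$2 = - B$2$3"
  unfolding skew_symmetric_def forall_3 by auto

lemma skew_symmetric_kernel_vec_eq:
  assumes "skew_symmetric B" "skew_symmetric C" "kernel_vec B = kernel_vec C"
  shows "B = C"
  using assms unfolding skew_symmetric_3_iff kernel_vec_def vec_eq_iff forall_3 by auto

lemma kernel_vec_cross_eq:
  assumes "skew_symmetric B" "B *v g = 0"
  shows "kernel_vec B $ i * g $ j = kernel_vec B $ j * g $ i"
proof -
  have "B$1$2 * g$2 + B$1$3 * g$3 = 0" "- B$1$2 * g$1 + B$2$3 * g$3 = 0"
    "- B$1$3 * g$1 - B$2$3 * g$2 = 0"
    using assms unfolding skew_symmetric_3_iff matrix_vector_mult_def vec_eq_iff forall_3 sum_3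
    by auto
  then show ?thesis
    using exhaust_3[of i] exhaust_3[of j]
    by (auto simp: kernel_vec_def algebra_simps)
qed

lemma kernel_vec_nonzero:
  assumes "skew_symmetric B" "quiver_connected B"
  shows "kernel_vec B \<noteq> 0"
proof
  assume "kernel_vec B = 0"
  then have "B $ a $ b = 0" for a b
    using assms(1) exhaust_3[of a] exhaust_3[of b]
    by (auto simp: skew_symmetric_3_iff kernel_vec_def vec_eq_iff forall_3)
  moreover have "(1::3, 2) \<in> {(a, b). B $ a $ b \<noteq> 0}\<^sup>*"
    using assms(2) unfolding quiver_connected_def by blast
  ultimately show False
    by (auto elim: converse_rtranclE)
qed

lemma common_multiple_of_parallel:
  fixes v w :: "'a::idom ^ 'n"
  assumes "v \<noteq> 0" "w \<noteq> 0" "\<And>i j. w $ i * v $ j = w $ j * v $ i"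
  shows "\<exists>n m. n \<noteq> 0 \<and> m \<noteq> 0 \<and> n *s v = m *s w"
proof -
  obtain i where wi: "w $ i \<noteq> 0" using assms(2) by (auto simp: vec_eq_iff)
  obtain j where vj: "v $ j \<noteq> 0" using assms(1) by (auto simp: vec_eq_iff)
  have vi: "v $ i \<noteq> 0" using assms(3)[of i j] wi vj by auto
  have "w $ i *s v = v $ i *s w"
  proof (subst vec_eq_iff, intro allI)
    fix j
    show "(w $ i *s v) $ j = (v $ i *s w) $ j"
      using assms(3)[of i j] by (simp add: mult.commute)
  qed
  with wi vi show ?thesis by blast
qed

lemma skew_symmetric_mat_mut:
  assumes "skew_symmetric B"
  shows "skew_symmetric (mat_mut k B)"
proof -
  have s: "B$1$1 = 0" "B$2$2 = 0" "B$3$3 = 0"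
    "B$2$1 = - B$1$2" "B$3$1 = - B$1$3" "B$3$2 = - B$2$3"
    using assms unfolding skew_symmetric_3_iff by auto
  show ?thesis
    using exhaust_3[of k] linorder_less_linear[of "B$1$2" 0]
      linorder_less_linear[of "B$1$3" 0] linorder_less_linear[of "B$2$3" 0]
    apply (elim disjE)
    apply (simp_all add: s skew_symmetric_3_iff mat_mut_def sgn_if max_def
        mult_pos_neg mult_neg_pos mult_neg_neg mult_pos_pos)
    apply (auto simp: zero_le_mult_iff mult_less_0_iff mult_le_0_iff algebra_simps)
    done
qed

lemma deg_mut_kernel_vec:
  assumes "skew_symmetric B"
  shows "deg_mut k B (kernel_vec B) = - kernel_vec (mat_mut k B)"
proof -
  have s: "B$1$1 = 0" "B$2$2 = 0" "B$3$3 = 0"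
    "B$2$1 = - B$1$2" "B$3$1 = - B$1$3" "B$3$2 = - B$2$3"
    using assms unfolding skew_symmetric_3_iff by auto
  show ?thesis
    using exhaust_3[of k] linorder_less_linear[of "B$1$2" 0]
      linorder_less_linear[of "B$1$3" 0] linorder_less_linear[of "B$2$3" 0]
    apply (elim disjE)
    apply (simp_all add: s mat_mut_def deg_mut_def kernel_vec_def vec_eq_iff forall_3
        sum_Collect_3 sgn_if max_def mult_pos_neg mult_neg_pos mult_neg_neg mult_pos_pos)
    apply (auto simp: zero_le_mult_iff mult_less_0_iff mult_le_0_iff)
    done
qed

lemma deg_mut_scalar_mult: "deg_mut k B (c *s d) = c *s deg_mut k B d"
  unfolding deg_mut_def by (simp add: vec_eq_iff sum_distrib_left algebra_simps)

lemma skew_symmetric_mut_class: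
  "B \<in> mut_class A \<Longrightarrow> skew_symmetric A \<Longrightarrow> skew_symmetric B"
  by (induction rule: mut_class.induct) (auto intro: skew_symmetric_mat_mut)

lemma graded_seeds_mut_class: "(B, d) \<in> graded_seeds A g \<Longrightarrow> B \<in> mut_class A"
  by (induction rule: graded_seeds.induct) (auto intro: mut_class.intros)

lemma mut_class_graded_seeds: "B \<in> mut_class A \<Longrightarrow> \<exists>d. (B, d) \<in> graded_seeds A g"
  by (induction rule: mut_class.induct) (auto intro: graded_seeds.intros)

lemma graded_seeds_proportional:
  assumes "(B, d) \<in> graded_seeds A g" "skew_symmetric A" "n *s g = m *s kernel_vec A"
  shows "\<exists>\<sigma>::int. \<bar>\<sigma>\<bar> = 1 \<and> n *s d = (\<sigma> * m) *s kernel_vec B"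
  using assms(1)
proof (induction rule: graded_seeds.induct)
  case base
  show ?case using assms(3) by (intro exI[of _ 1]) simp
next
  case (step B d k)
  then obtain \<sigma> :: int where \<sigma>: "\<bar>\<sigma>\<bar> = 1" "n *s d = (\<sigma> * m) *s kernel_vec B"
    by blast
  have "skew_symmetric B"
    using skew_symmetric_mut_class graded_seeds_mut_class step.hyps assms(2) by blast
  have "n *s deg_mut k B d = deg_mut k B (n *s d)"
    by (simp add: deg_mut_scalar_mult)
  also have "\<dots> = (\<sigma> * m) *s deg_mut k B (kernel_vec B)"
    by (simp add: \<sigma>(2) deg_mut_scalar_mult)
  also have "\<dots> = (- \<sigma> * m) *s kernel_vec (mat_mut k B)"
    using \<open>skew_symmetric B\<close> by (simp add: deg_mut_kernel_vec vec_eq_iff)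
  finally have "n *s deg_mut k B d = (- \<sigma> * m) *s kernel_vec (mat_mut k B)" .
  then show ?case using \<sigma>(1) by (intro exI[of _ "- \<sigma>"]) simp
qed

lemma graded_seeds_abs_degree:
  assumes "(B, d) \<in> graded_seeds A g" "skew_symmetric A" "n *s g = m *s kernel_vec A"
  shows "\<bar>n * d $ j\<bar> = \<bar>m * kernel_vec B $ j\<bar>"
proof -
  obtain \<sigma> :: int where \<sigma>: "\<bar>\<sigma>\<bar> = 1" "n *s d = (\<sigma> * m) *s kernel_vec B"
    using graded_seeds_proportional[OF assms] by blast
  have "n * d $ j = \<sigma> * (m * kernel_vec B $ j)"
    using arg_cong[OF \<sigma>(2), of "\<lambda>v. v $ j"] by simp
  then show ?thesis using \<sigma>(1) by (simp add: abs_mult)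
qed

lemma finite_vec_components_iff:
  fixes V :: "('a ^ 'n::finite) set"
  shows "finite {v $ j | v j. v \<in> V} \<longleftrightarrow> finite V"
proof
  let ?C = "{v $ j | v j. v \<in> V}"
  assume "finite ?C"
  then have "finite (vec_lambda ` (PiE UNIV (\<lambda>_. ?C)))"
    by (intro finite_imageI finite_PiE) simp_all
  moreover have "V \<subseteq> vec_lambda ` (PiE UNIV (\<lambda>_. ?C))"
  proof
    fix v assume "v \<in> V"
    then have "(\<lambda>j. v $ j) \<in> PiE UNIV (\<lambda>_. ?C)" by auto
    then show "v \<in> vec_lambda ` (PiE UNIV (\<lambda>_. ?C))"
      by (rule rev_image_eqI) simp
  qed
  ultimately show "finite V" by (rule finite_subset[rotated])
next
  assume "finite V"
  moreover have "{v $ j | v j. v \<in> V} = (\<Union>v\<in>V. range (($) v))" by auto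
  ultimately show "finite {v $ j | v j. v \<in> V}" by simp
qed

lemma finite_if_abs_scaled_in_finite:
  fixes S T :: "int set" and n m :: int
  assumes "n \<noteq> 0" "finite T" "\<forall>x\<in>S. \<exists>y\<in>T. \<bar>n * x\<bar> = \<bar>m * y\<bar>"
  shows "finite S"
proof -
  have "S \<subseteq> (\<Union>y\<in>T. {- \<bar>m * y\<bar>..\<bar>m * y\<bar>})"
  proof
    fix x assume "x \<in> S"
    then obtain y where "y \<in> T" "\<bar>n * x\<bar> = \<bar>m * y\<bar>" using assms(3) by blast
    moreover have "\<bar>x\<bar> \<le> \<bar>n * x\<bar>"
      using \<open>n \<noteq> 0\<close> by (simp add: abs_mult mult_le_cancel_right1 int_one_le_iff_zero_less)
    ultimately show "x \<in> (\<Union>y\<in>T. {- \<bar>m * y\<bar>..\<bar>m * y\<bar>})" by force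
  qed
  moreover have "finite (\<Union>y\<in>T. {- \<bar>m * y\<bar>..\<bar>m * y\<bar>})"
    using assms(2) by simp
  ultimately show ?thesis by (rule finite_subset)
qed

theorem mainTheorem11:
  fixes A :: "int ^ 3 ^ 3" and g :: "int ^ 3"
  assumes "skew_symmetric A"
    and "quiver_connected A"
    and "g \<noteq> 0"
    and "A *v g = 0"
  shows "infinite (occurring_degrees A g) \<longleftrightarrow> mutation_infinite A"
proof -
  obtain n m :: int where nm: "n \<noteq> 0" "m \<noteq> 0" "n *s g = m *s kernel_vec A"
    using common_multiple_of_parallel[OF assms(3) kernel_vec_nonzero[OF assms(1,2)]]
      kernel_vec_cross_eq[OF assms(1,4)] by blast
  note abs_degree = graded_seeds_abs_degree[OF _ assms(1) nm(3)]
  define E where "E = {v $ j | v j. v \<in> kernel_vec ` mut_class A}"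
  have in_E: "kernel_vec B $ j \<in> E" if "B \<in> mut_class A" for B j
    unfolding E_def using that by blast
  have "\<forall>x\<in>occurring_degrees A g. \<exists>y\<in>E. \<bar>n * x\<bar> = \<bar>m * y\<bar>"
  proof
    fix x assume "x \<in> occurring_degrees A g"
    then obtain B d j where x: "x = d $ j" and seed: "(B, d) \<in> graded_seeds A g"
      unfolding occurring_degrees_def by blast
    show "\<exists>y\<in>E. \<bar>n * x\<bar> = \<bar>m * y\<bar>"
      using in_E[OF graded_seeds_mut_class[OF seed]] abs_degree[OF seed] unfolding x by blast
  qed
  moreover have "\<forall>y\<in>E. \<exists>x\<in>occurring_degrees A g. \<bar>m * y\<bar> = \<bar>n * x\<bar>"
  proof
    fix y assume "y \<in> E"
    then obtain B j where B: "B \<in> mut_class A" and y: "y = kernel_vec B $ j"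
      unfolding E_def by blast
    obtain d where seed: "(B, d) \<in> graded_seeds A g"
      using mut_class_graded_seeds[OF B] by blast
    then have "d $ j \<in> occurring_degrees A g"
      unfolding occurring_degrees_def by blast
    with abs_degree[OF seed, of j] show "\<exists>x\<in>occurring_degrees A g. \<bar>m * y\<bar> = \<bar>n * x\<bar>"
      unfolding y by metis
  qed
  ultimately have "finite (occurring_degrees A g) \<longleftrightarrow> finite E"
    using finite_if_abs_scaled_in_finite[OF nm(1)] finite_if_abs_scaled_in_finite[OF nm(2)]
    by blast
  also have "\<dots> \<longleftrightarrow> finite (kernel_vec ` mut_class A)"
    unfolding E_def by (rule finite_vec_components_iff)
  also have "\<dots> \<longleftrightarrow> finite (mut_class A)"
  proof (rule finite_image_iff, rule inj_onI)
    fix B C assume "B \<in> mut_class A" "C \<in> mut_class A" "kernel_vec B = kernel_vec C"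
    then show "B = C"
      using skew_symmetric_kernel_vec_eq skew_symmetric_mut_class assms(1) by blast
  qed
  finally show ?thesis unfolding mutation_infinite_def by blast
qed

end
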